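(* Let $q=2$. Let $f=\phi(F)$ be a symplectic basis function with $F$ of class $(\rho,\sigma,\tau,\upsilon)\neq(1,0,m-2,0)$ and $\rho>0$. Then there exists $g\in \mathbf F_2\operatorname{Sp}(V)$ such that $gf$ is a function of class $(\rho-1,\sigma,\tau+2,\upsilon)$.
   Context: $k=\mathbf F_2$. $V$ is a $2m$-dimensional $k$-space with nondegenerate alternating form and symplectic basis with coordinate functions $x_1,\dots,x_m,y_m,\dots,y_1$; $\operatorname{Sp}(V)$ acts on functions $V\to k$ by linear substitution (note $x_i^2=x_i$ as functions), extended linearly to the group ring. In $k[X_1,\dots,X_m,Y_1,\dots,Y_m]$ put $W_i=X_iY_i$ and let $Z_i$ denote $X_i$ or $Y_i$. A square-free homogeneous polynomial $F$ is of class $(\rho,\sigma,\tau,\upsilon)$ if there is a partition of $\{1,\dots,m\}$ into $R=\{r_1,\dots,r_\rho\}$, $R'=\{r'_1,\dots,r'_\rho\}$, $S,T,U$ with $|S|=\sigma,|T|=\tau,|U|=\upsilon$ and $F=\prod_{i=1}^\rho(W_{r_i}+W_{r'_i})\prod_{i\in S}W_i\prod_{i\in T}Z_i$; a function is of that class if it equals $\phi(F')$ for some $F'$ of that class, where $\phi$ is evaluation $X_i\mapsto x_i,Y_i\mapsto y_i$. $P^\lambda_\ell$ is the set of such polynomials with $2\rho+2\sigma+\tau=\lambda$ and $\sigma\leq\ell$; choose $B^\lambda_0\subseteq P^\lambda_0$ maximal linearly independent and inductively $B^\lambda_\ell=B^\lambda_{\ell-1}\cup P'^\lambda_\ell$ ($P'^\lambda_\ell\subseteq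 P^\lambda_\ell$) a basis of the span of $P^\lambda_\ell$. For $q=2$ a symplectic basis function is $\phi(F)$ with $F\in B^\lambda_{\lfloor\lambda/2\rfloor}$, $1\le\lambda\le 2m-1$. *)

theory Defs
  imports Complex_Main "HOL-Library.Z2" "HOL-Library.Poly_Mapping" "HOL-Library.FuncSet"
begin

text \<open>Coordinates: Inl i is x_i, Inr i is y_i (1 <= i <= m).  A vector of V is
  a function from coordinates to F_2 = bit, vanishing outside the 2m coordinates.\<close>

type_synonym coord = "nat + nat"
type_synonym vec = "coord \<Rightarrow> bit"

definition coords :: "nat \<Rightarrow> coord set" where
  "coords m = Inl ` {1..m} \<union> Inr ` {1..m}"

definition Vsp :: "nat \<Rightarrow> vec set" where
  "Vsp m = {v. \<forall>j. v j \<noteq> 0 \<longrightarrow> j \<in> coords m}"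

definition vadd :: "vec \<Rightarrow> vec \<Rightarrow> vec" where
  "vadd u w = (\<lambda>j. u j + w j)"

text \<open>Nondegenerate alternating form with symplectic basis e_1..e_m, f_m..f_1,
  coordinate functions x_i, y_i (in characteristic 2 the signs disappear).\<close>
definition omega :: "nat \<Rightarrow> vec \<Rightarrow> vec \<Rightarrow> bit" where
  "omega m u w = (\<Sum>i\<in>{1..m}. u (Inl i) * w (Inr i) + u (Inr i) * w (Inl i))"

text \<open>Sp(V): F_2-linear (= additive) bijections of V preserving the form;
  taken extensional so that Sp(V) is a finite set of functions.\<close>
definition Sp :: "nat \<Rightarrow> (vec \<Rightarrow> vec) set" where
  "Sp m = {h. bij_betw h (Vsp m) (Vsp m)
             \<and> (\<forall>u\<in>Vsp m. \<forall>w\<in>Vsp m. h (vadd u w) = vadd (h u) (h w))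
             \<and> (\<forall>u\<in>Vsp m. \<forall>w\<in>Vsp m. omega m (h u) (h w) = omega m u w)
             \<and> h \<in> extensional (Vsp m)}"

text \<open>Elements of the group ring F_2 Sp(V) are functions Sp(V) -> F_2 (Sp(V) is
  finite); h acts on a function f : V -> F_2 by linear substitution
  (h f)(v) = f(h^{-1} v), extended linearly.\<close>
definition gr_act :: "nat \<Rightarrow> ((vec \<Rightarrow> vec) \<Rightarrow> bit) \<Rightarrow> (vec \<Rightarrow> bit) \<Rightarrow> (vec \<Rightarrow> bit)" where
  "gr_act m c f = (\<lambda>v. \<Sum>h\<in>Sp m. c h * f (inv_into (Vsp m) h v))"

type_synonym mono = "coord \<Rightarrow>\<^sub>0 nat"
type_synonym poly = "mono \<Rightarrow>\<^sub>0 bit"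

definition Var :: "coord \<Rightarrow> poly" where
  "Var j = Poly_Mapping.single (Poly_Mapping.single j 1) 1"

definition Wp :: "nat \<Rightarrow> poly" where
  "Wp i = Var (Inl i) * Var (Inr i)"

definition phi :: "poly \<Rightarrow> vec \<Rightarrow> bit" where
  "phi F v = (\<Sum>a\<in>Poly_Mapping.keys F.
      Poly_Mapping.lookup F a * (\<Prod>j\<in>Poly_Mapping.keys a. v j ^ Poly_Mapping.lookup a j))"

text \<open>F is of class (rho, sigma, tau, upsilon): R = r`{..<rho}, R' = r'`{..<rho},
  S, T, U partition {1..m}; for i in T, Z_i is X_i if z i, else Y_i.\<close>
definition poly_class :: "nat \<Rightarrow> poly \<Rightarrow> nat \<Rightarrow> nat \<Rightarrow> nat \<Rightarrow> nat \<Rightarrow> bool" where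
  "poly_class m F \<rho> \<sigma> \<tau> \<upsilon> \<longleftrightarrow>
    (\<exists>r r' S T U z.
       inj_on r {..<\<rho>} \<and> inj_on r' {..<\<rho>} \<and>
       r ` {..<\<rho>} \<inter> r' ` {..<\<rho>} = {} \<and>
       r ` {..<\<rho>} \<inter> S = {} \<and> r ` {..<\<rho>} \<inter> T = {} \<and> r ` {..<\<rho>} \<inter> U = {} \<and>
       r' ` {..<\<rho>} \<inter> S = {} \<and> r' ` {..<\<rho>} \<inter> T = {} \<and> r' ` {..<\<rho>} \<inter> U = {} \<and>
       S \<inter> T = {} \<and> S \<inter> U = {} \<and> T \<inter> U = {} \<and>
       r ` {..<\<rho>} \<union> r' ` {..<\<rho>} \<union> S \<union> T \<union> U = {1..m} \<and>
       card S = \<sigma> \<and> card T = \<tau> \<and> card U = \<upsilon> \<and>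
       F = (\<Prod>i<\<rho>. Wp (r i) + Wp (r' i)) * (\<Prod>i\<in>S. Wp i)
             * (\<Prod>i\<in>T. Var (if z i then Inl i else Inr i)))"

definition fun_class :: "nat \<Rightarrow> (vec \<Rightarrow> bit) \<Rightarrow> nat \<Rightarrow> nat \<Rightarrow> nat \<Rightarrow> nat \<Rightarrow> bool" where
  "fun_class m f \<rho> \<sigma> \<tau> \<upsilon> \<longleftrightarrow>
    (\<exists>F'. poly_class m F' \<rho> \<sigma> \<tau> \<upsilon> \<and> (\<forall>v\<in>Vsp m. f v = phi F' v))"

definition Pset :: "nat \<Rightarrow> nat \<Rightarrow> nat \<Rightarrow> poly set" where
  "Pset m lam l = {F. \<exists>\<rho> \<sigma> \<tau> \<upsilon>. poly_class m F \<rho> \<sigma> \<tau> \<upsilon> \<and>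
                        2*\<rho> + 2*\<sigma> + \<tau> = lam \<and> \<sigma> \<le> l}"

definition pscale :: "bit \<Rightarrow> poly \<Rightarrow> poly" where
  "pscale c p = Poly_Mapping.map (\<lambda>a. c * a) p"

abbreviation pspan :: "poly set \<Rightarrow> poly set" where
  "pspan \<equiv> module.span pscale"

abbreviation pindep :: "poly set \<Rightarrow> bool" where
  "pindep A \<equiv> \<not> module.dependent pscale A"

text \<open>B is an admissible choice of the sets B^lambda_l, 0 <= l <= floor(lambda/2):
  B^lambda_0 a maximal linearly independent subset of P^lambda_0, and
  B^lambda_l = B^lambda_(l-1) \<union> P' with P' \<subseteq> P^lambda_l, a basis of span P^lambda_l.\<close>
definition basis_choice :: "nat \<Rightarrow> nat \<Rightarrow> (nat \<Rightarrow> poly set) \<Rightarrow> bool" where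
  "basis_choice m lam B \<longleftrightarrow>
     B 0 \<subseteq> Pset m lam 0 \<and> pindep (B 0) \<and>
     (\<forall>p\<in>Pset m lam 0. p \<notin> B 0 \<longrightarrow> \<not> pindep (insert p (B 0))) \<and>
     (\<forall>l. 1 \<le> l \<and> l \<le> lam div 2 \<longrightarrow>
        (\<exists>P'. P' \<subseteq> Pset m lam l \<and> B l = B (l - 1) \<union> P' \<and>
              pindep (B l) \<and> pspan (B l) = pspan (Pset m lam l)))"

definition symplectic_basis_poly :: "nat \<Rightarrow> (nat \<Rightarrow> nat \<Rightarrow> poly set) \<Rightarrow> poly \<Rightarrow> bool" where
  "symplectic_basis_poly m B F \<longleftrightarrow>
     (\<exists>lam. 1 \<le> lam \<and> lam \<le> 2*m - 1 \<and> F \<in> B lam (lam div 2))"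

end

theory Submission
  imports Defs
begin

(* Write F = (W_a + W_b) P with (a, b) the first pair of the
   class.  The heart of the proof is one element g of F_2 Sp(V), the sum of four symplectic maps
   acting only on the coordinates x_a, x_b, x_k, y_a, y_b, y_k for a third index k: if A and B
   do not involve these coordinates, then g maps (W_a + W_b)(A + W_k B) to y_a y_k (A + W_b B).
   This is a finite identity in six variables, checked by evaluation on all local vectors.
   Depending on where a suitable k is found, P has the required shape:
     k in U:            A = P, B = 0, and b replaces k in U;
     k in S:            A = 0, P = W_k B, and b replaces k in S;
     (k, c) a pair:     P = (W_k + W_c) C, A = W_c C, B = C, and (b, c) becomes a pair;
   in each case a and k join T with Z = Y, giving the class (rho - 1, sigma, tau + 2, upsilon).
   The only configuration without such a k is the excluded class (1, 0, m - 2, 0). *)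

(* Over F_2 = bit keep + and * as ring operations instead of xor/and. *)
declare add_bit_eq_xor[simp del] mult_bit_eq_and[simp del]

section \<open>Evaluation of polynomials is a ring homomorphism\<close>

definition mono_eval :: "mono \<Rightarrow> vec \<Rightarrow> bit" where
  "mono_eval a v = (\<Prod>j\<in>Poly_Mapping.keys a. v j ^ Poly_Mapping.lookup a j)"

lemma phi_via_mono_eval:
  "phi F v = (\<Sum>a\<in>Poly_Mapping.keys F. Poly_Mapping.lookup F a * mono_eval a v)"
  by (simp add: phi_def mono_eval_def)

lemma phi_add: "phi (p + q) v = phi p v + phi q v"
  unfolding phi_via_mono_eval
  by (rule setsum_keys_plus_distrib) (auto simp: distrib_right)

lemma phi_zero[simp]: "phi 0 v = 0"
  by (simp add: phi_def)

lemma phi_single: "phi (Poly_Mapping.single a c) v = c * mono_eval a v"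
  by (cases "c = 0") (simp_all add: phi_via_mono_eval)

lemma mono_eval_superset:
  assumes "finite K" "Poly_Mapping.keys a \<subseteq> K"
  shows "mono_eval a v = (\<Prod>j\<in>K. v j ^ Poly_Mapping.lookup a j)"
  unfolding mono_eval_def
  by (rule prod.mono_neutral_left[OF assms]) (auto simp: in_keys_iff simp del: power_bit_unfold)

lemma mono_eval_add: "mono_eval (a + b) v = mono_eval a v * mono_eval b v"
proof -
  let ?K = "Poly_Mapping.keys a \<union> Poly_Mapping.keys b"
  have keys_sum: "Poly_Mapping.keys (a + b) \<subseteq> ?K"
    by (auto simp: in_keys_iff lookup_add)
  have "mono_eval (a + b) v = (\<Prod>j\<in>?K. v j ^ Poly_Mapping.lookup (a + b) j)"
    using keys_sum by (intro mono_eval_superset) auto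
  also have "\<dots> = (\<Prod>j\<in>?K. v j ^ Poly_Mapping.lookup a j) * (\<Prod>j\<in>?K. v j ^ Poly_Mapping.lookup b j)"
    by (simp add: lookup_add power_add prod.distrib del: power_bit_unfold)
  also have "\<dots> = mono_eval a v * mono_eval b v"
    using mono_eval_superset[of ?K a v] mono_eval_superset[of ?K b v] by simp
  finally show ?thesis .
qed

lemma update_eq_plus_single:
  "a \<notin> Poly_Mapping.keys f \<Longrightarrow> Poly_Mapping.update a b f = f + Poly_Mapping.single a b"
  by (rule poly_mapping_eqI) (auto simp: lookup_update lookup_add lookup_single in_keys_iff)

lemma phi_single_mult: "phi (Poly_Mapping.single a c * q) v = c * mono_eval a v * phi q v"
proof (induction q rule: update_induct)
  case (update f b d)
  then show ?case
    by (simp add: update_eq_plus_single distrib_left phi_add mult_single phi_single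
        mono_eval_add algebra_simps)
qed simp

lemma phi_mult: "phi (p * q) v = phi p v * phi q v"
proof (induction p rule: update_induct)
  case (update f b d)
  then show ?case
    by (simp only: update_eq_plus_single[OF update(1)] distrib_right phi_add phi_single_mult
        phi_single)
qed simp

lemma phi_one: "phi 1 v = 1"
  by (simp add: phi_via_mono_eval mono_eval_def)

lemma phi_Var: "phi (Var j) v = v j"
  by (simp add: Var_def phi_single mono_eval_def)

lemma phi_prod: "phi (\<Prod>i\<in>A. P i) v = (\<Prod>i\<in>A. phi (P i) v)"
  by (induction A rule: infinite_finite_induct) (simp_all add: phi_mult phi_one)

lemma finite_Vsp: "finite (Vsp m)"
proof -
  have "Vsp m \<subseteq> {v. \<forall>j. (j \<in> coords m \<longrightarrow> v j \<in> UNIV) \<and> (j \<notin> coords m \<longrightarrow> v j = 0)}"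
    by (auto simp: Vsp_def)
  moreover have "finite {v :: vec. \<forall>j. (j \<in> coords m \<longrightarrow> v j \<in> UNIV) \<and> (j \<notin> coords m \<longrightarrow> v j = 0)}"
  proof (rule finite_set_of_finite_funs)
    show "finite (coords m)" by (simp add: coords_def)
    have bit_UNIV: "(UNIV :: bit set) = {0, 1}" by auto
    show "finite (UNIV :: bit set)" by (simp only: bit_UNIV finite_insert finite.emptyI)
  qed
  ultimately show ?thesis by (rule finite_subset)
qed

lemma finite_Sp: "finite (Sp m)"
proof (rule finite_subset)
  show "Sp m \<subseteq> Vsp m \<rightarrow>\<^sub>E Vsp m"
    by (auto simp: Sp_def PiE_def bij_betw_def)
  show "finite (Vsp m \<rightarrow>\<^sub>E Vsp m)"
    by (simp add: finite_PiE finite_Vsp)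
qed

lemma gr_act_indicator_sum:
  assumes "\<And>i. i < n \<Longrightarrow> hs i \<in> Sp m"
  shows "gr_act m (\<lambda>h. \<Sum>i<n. if h = hs i then 1 else 0) f v
       = (\<Sum>i<n. f (inv_into (Vsp m) (hs i) v))"
proof -
  have "gr_act m (\<lambda>h. \<Sum>i<n. if h = hs i then 1 else 0) f v
      = (\<Sum>i<n. \<Sum>h\<in>Sp m. if h = hs i then f (inv_into (Vsp m) h v) else 0)"
    unfolding gr_act_def sum_distrib_right by (subst sum.swap) (auto intro!: sum.cong)
  also have "\<dots> = (\<Sum>i<n. f (inv_into (Vsp m) (hs i) v))"
    using assms finite_Sp by (intro sum.cong) auto
  finally show ?thesis .
qed

text \<open>Matrices acting on the coordinates (x_1, x_2, x_3, y_1, y_2, y_3) of a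
  6-dimensional symplectic space, indexed by 0..5.\<close>
type_synonym mat6 = "nat \<Rightarrow> nat \<Rightarrow> bit"

definition mat_apply :: "mat6 \<Rightarrow> (nat \<Rightarrow> bit) \<Rightarrow> nat \<Rightarrow> bit" where
  "mat_apply M x c = (\<Sum>d<6. M c d * x d)"

definition mat_mult :: "mat6 \<Rightarrow> mat6 \<Rightarrow> mat6" where
  "mat_mult M N c e = (\<Sum>d<6. M c d * N d e)"

definition mat_id :: mat6 where
  "mat_id c d = (if c = d then 1 else 0)"

definition inverse_mats :: "mat6 \<Rightarrow> mat6 \<Rightarrow> bool" where
  "inverse_mats M N \<longleftrightarrow>
     (\<forall>c<6. \<forall>d<6. mat_mult M N c d = mat_id c d \<and> mat_mult N M c d = mat_id c d)"

definition omega6 :: "(nat \<Rightarrow> bit) \<Rightarrow> (nat \<Rightarrow> bit) \<Rightarrow> bit" where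
  "omega6 x y = (\<Sum>c<3. x c * y (c + 3) + x (c + 3) * y c)"

definition gram6 :: mat6 where
  "gram6 e f = (if f = e + 3 \<or> e = f + 3 then 1 else 0)"

definition symplectic6 :: "mat6 \<Rightarrow> bool" where
  "symplectic6 M \<longleftrightarrow> (\<forall>e<6. \<forall>f<6. omega6 (\<lambda>c. M c e) (\<lambda>c. M c f) = gram6 e f)"

lemma sum_lessThan_6:
  "(\<Sum>c<6. (g :: nat \<Rightarrow> _) c) = g 0 + g 1 + g 2 + g 3 + g 4 + (g 5 :: 'a::comm_monoid_add)"
  by (simp add: numeral_eq_Suc lessThan_Suc add_ac)

lemma sum_lessThan_4: "(\<Sum>c<4. (g :: nat \<Rightarrow> _) c) = g 0 + g 1 + g 2 + (g 3 :: 'a::comm_monoid_add)"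
  by (simp add: numeral_eq_Suc lessThan_Suc add_ac)

lemma sum_lessThan_3: "(\<Sum>c<3. (g :: nat \<Rightarrow> _) c) = g 0 + g 1 + (g 2 :: 'a::comm_monoid_add)"
  by (simp add: numeral_eq_Suc lessThan_Suc add_ac)

lemma less_6_cases: "(e::nat) < 6 \<longleftrightarrow> e = 0 \<or> e = 1 \<or> e = 2 \<or> e = 3 \<or> e = 4 \<or> e = 5"
  by arith

lemma all_lessThan_6: "(\<forall>e<6. P e) \<longleftrightarrow> P 0 \<and> P 1 \<and> P 2 \<and> P 3 \<and> P 4 \<and> P (5::nat)"
  unfolding less_6_cases by blast

lemma omega6_gram: "omega6 x y = (\<Sum>e<6. \<Sum>f<6. x e * y f * gram6 e f)"
  by (simp add: omega6_def sum_lessThan_6 sum_lessThan_3 gram6_def)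

lemma mat_apply_mult: "mat_apply M (mat_apply N x) c = mat_apply (mat_mult M N) x c"
proof -
  have "mat_apply M (mat_apply N x) c = (\<Sum>d<6. \<Sum>e<6. M c d * N d e * x e)"
    by (simp add: mat_apply_def sum_distrib_left mult.assoc)
  also have "\<dots> = mat_apply (mat_mult M N) x c"
    by (subst sum.swap) (simp add: mat_apply_def mat_mult_def sum_distrib_right)
  finally show ?thesis .
qed

lemma mat_apply_id: "c < 6 \<Longrightarrow> mat_apply mat_id x c = x c"
  unfolding mat_apply_def mat_id_def by (simp add: if_distrib[of "\<lambda>t. t * _"] cong: if_cong)

text \<open>omega6 is bilinear, so a matrix with symplectic columns preserves it.\<close>
lemma omega6_mat_apply:
  assumes "symplectic6 M"
  shows "omega6 (mat_apply M x) (mat_apply M y) = omega6 x y"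
proof -
  let ?G = "\<lambda>c e f. M c e * M (c + 3) f + M (c + 3) e * M c f"
  have expand: "(\<Sum>e<6. M c e * x e) * (\<Sum>f<6. M c' f * y f)
      = (\<Sum>e<6. \<Sum>f<6. x e * y f * (M c e * M c' f))" for c c'
    by (simp add: sum_product mult_ac)
  have "omega6 (mat_apply M x) (mat_apply M y) = (\<Sum>c<3. \<Sum>e<6. \<Sum>f<6. x e * y f * ?G c e f)"
    unfolding omega6_def mat_apply_def expand by (simp only: distrib_left sum.distrib)
  also have "\<dots> = (\<Sum>e<6. \<Sum>f<6. \<Sum>c<3. x e * y f * ?G c e f)"
    by (subst sum.swap) (rule sum.cong, simp, rule sum.swap)
  also have "\<dots> = (\<Sum>e<6. \<Sum>f<6. x e * y f * gram6 e f)"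
    using assms unfolding symplectic6_def omega6_def
    by (auto simp: sum_distrib_left[symmetric] intro!: sum.cong)
  also have "\<dots> = omega6 x y" by (simp add: omega6_gram)
  finally show ?thesis .
qed

section \<open>Symplectic maps supported on three hyperbolic pairs\<close>

definition indep_of :: "nat set \<Rightarrow> (vec \<Rightarrow> bit) \<Rightarrow> bool" where
  "indep_of K A \<longleftrightarrow>
     (\<forall>u w. (\<forall>i. i \<notin> K \<longrightarrow> u (Inl i) = w (Inl i) \<and> u (Inr i) = w (Inr i)) \<longrightarrow> A u = A w)"

lemma vadd_Vsp: "u \<in> Vsp m \<Longrightarrow> w \<in> Vsp m \<Longrightarrow> vadd u w \<in> Vsp m"
  unfolding Vsp_def vadd_def by force

text \<open>For three distinct indices a, b, k the coordinates x_a, x_b, x_k, y_a, y_b, y_k span a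
  6-dimensional symplectic subspace; a 6 x 6 matrix acting on these coordinates and fixing
  all others gives a linear map of V.\<close>
locale three_indices =
  fixes m a b k :: nat
  assumes distinct: "distinct [a, b, k]"
    and in_range: "{a, b, k} \<subseteq> {1..m}"
begin

definition loc_coord :: "nat \<Rightarrow> coord" where
  "loc_coord c = [Inl a, Inl b, Inl k, Inr a, Inr b, Inr k] ! c"

definition local_part :: "vec \<Rightarrow> nat \<Rightarrow> bit" where
  "local_part v c = v (loc_coord c)"

text \<open>The map of V given by M on the local coordinates (and the identity elsewhere);
  it is taken extensional on V, as required of elements of Sp(V).\<close>
definition local_map :: "mat6 \<Rightarrow> vec \<Rightarrow> vec" where
  "local_map M v = (if v \<in> Vsp m then (\<lambda>j. if j \<in> loc_coord ` {..<6}
       then mat_apply M (local_part v) (THE c. c < 6 \<and> loc_coord c = j) else v j) else undefined)"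

lemma loc_coord_inj: "inj_on loc_coord {..<6}"
proof -
  have "distinct [Inl a, Inl b, Inl k, Inr a, Inr b, Inr k :: coord]"
    using distinct by auto
  then show ?thesis unfolding loc_coord_def by (rule inj_on_nth) simp
qed

lemma loc_coord_mem: "c < 6 \<Longrightarrow> loc_coord c \<in> {Inl a, Inl b, Inl k, Inr a, Inr b, Inr k}"
  unfolding loc_coord_def using nth_mem[of c "[Inl a, Inl b, Inl k, Inr a, Inr b, Inr k]"] by simp

lemma loc_coord_outside:
  "i \<notin> {a, b, k} \<Longrightarrow> Inl i \<notin> loc_coord ` {..<6} \<and> Inr i \<notin> loc_coord ` {..<6}"
  using loc_coord_mem by fastforce

lemma loc_coord_coords: "c < 6 \<Longrightarrow> loc_coord c \<in> coords m"
  using loc_coord_mem in_range by (fastforce simp: coords_def)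

lemma the_loc_coord: "c < 6 \<Longrightarrow> (THE c'. c' < 6 \<and> loc_coord c' = loc_coord c) = c"
  using loc_coord_inj by (auto simp: inj_on_def)

lemma local_map_local:
  "v \<in> Vsp m \<Longrightarrow> c < 6 \<Longrightarrow> local_map M v (loc_coord c) = mat_apply M (local_part v) c"
  by (simp add: local_map_def the_loc_coord)

lemma local_map_outside:
  "v \<in> Vsp m \<Longrightarrow> j \<notin> loc_coord ` {..<6} \<Longrightarrow> local_map M v j = v j"
  by (simp add: local_map_def)

lemma local_map_Vsp: "v \<in> Vsp m \<Longrightarrow> local_map M v \<in> Vsp m"
  unfolding Vsp_def
proof clarify
  fix j assume v: "\<forall>j. v j \<noteq> 0 \<longrightarrow> j \<in> coords m" and nz: "local_map M v j \<noteq> 0"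
  show "j \<in> coords m"
  proof (cases "j \<in> loc_coord ` {..<6}")
    case True
    then show ?thesis using loc_coord_coords by auto
  next
    case False
    then show ?thesis using v nz local_map_outside[of v j M] by (auto simp: Vsp_def)
  qed
qed

lemma vec_eqI:
  assumes local: "\<And>c. c < 6 \<Longrightarrow> u (loc_coord c) = w (loc_coord c)"
    and other: "\<And>j. j \<notin> loc_coord ` {..<6} \<Longrightarrow> u j = w j"
  shows "u = w"
proof
  fix j
  show "u j = w j"
  proof (cases "j \<in> loc_coord ` {..<6}")
    case True
    then obtain c where "c < 6" "j = loc_coord c" by auto
    then show ?thesis using local by simp
  qed (rule other)
qed

lemma local_part_local_map:
  "v \<in> Vsp m \<Longrightarrow> c < 6 \<Longrightarrow> local_part (local_map M v) c = mat_apply M (local_part v) c"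
  by (simp add: local_part_def local_map_local)

lemma mat_apply_local_map:
  assumes "v \<in> Vsp m"
  shows "mat_apply P (local_part (local_map M v)) c = mat_apply P (mat_apply M (local_part v)) c"
  unfolding mat_apply_def[of P] using assms by (simp add: local_part_local_map)

lemma local_map_mult:
  assumes v: "v \<in> Vsp m"
  shows "local_map M (local_map N v) = local_map (mat_mult M N) v"
proof (rule vec_eqI)
  fix c :: nat assume c: "c < 6"
  have "local_map M (local_map N v) (loc_coord c) = mat_apply M (mat_apply N (local_part v)) c"
    using v c by (simp add: local_map_Vsp local_map_local mat_apply_local_map)
  also have "\<dots> = local_map (mat_mult M N) v (loc_coord c)"
    using v c by (simp add: local_map_local mat_apply_mult)
  finally show "local_map M (local_map N v) (loc_coord c) = local_map (mat_mult M N) v (loc_coord c)" .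
qed (simp add: v local_map_Vsp local_map_outside)

lemma local_map_identity:
  assumes P: "\<forall>c<6. \<forall>d<6. P c d = mat_id c d" and v: "v \<in> Vsp m"
  shows "local_map P v = v"
proof (rule vec_eqI)
  fix c :: nat assume c: "c < 6"
  have "mat_apply P (local_part v) c = mat_apply mat_id (local_part v) c"
    unfolding mat_apply_def using P c by simp
  then show "local_map P v (loc_coord c) = v (loc_coord c)"
    using v c by (simp add: local_map_local mat_apply_id local_part_def)
qed (simp add: v local_map_outside)

lemma local_map_add:
  assumes u: "u \<in> Vsp m" and w: "w \<in> Vsp m"
  shows "local_map M (vadd u w) = vadd (local_map M u) (local_map M w)"
proof (rule vec_eqI)
  fix c :: nat assume "c < 6"
  then show "local_map M (vadd u w) (loc_coord c) = vadd (local_map M u) (local_map M w) (loc_coord c)"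
    using u w vadd_Vsp[OF u w]
    by (simp add: local_map_local vadd_def local_part_def mat_apply_def distrib_left sum.distrib)
next
  fix j assume "j \<notin> loc_coord ` {..<6}"
  then show "local_map M (vadd u w) j = vadd (local_map M u) (local_map M w) j"
    using u w vadd_Vsp[OF u w] by (simp add: local_map_outside vadd_def)
qed

lemma local_map_fixes:
  "v \<in> Vsp m \<Longrightarrow> i \<notin> {a, b, k} \<Longrightarrow>
   local_map M v (Inl i) = v (Inl i) \<and> local_map M v (Inr i) = v (Inr i)"
  using loc_coord_outside local_map_outside by simp

lemma local_map_indep: "indep_of {a, b, k} A \<Longrightarrow> v \<in> Vsp m \<Longrightarrow> A (local_map M v) = A v"
  unfolding indep_of_def using local_map_fixes by blast

lemma omega_split:
  "omega m u w = omega6 (local_part u) (local_part w)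
     + (\<Sum>i\<in>{1..m} - {a, b, k}. u (Inl i) * w (Inr i) + u (Inr i) * w (Inl i))"
proof -
  let ?t = "\<lambda>i. u (Inl i) * w (Inr i) + u (Inr i) * w (Inl i)"
  have "omega m u w = sum ?t ({1..m} - {a, b, k}) + sum ?t {a, b, k}"
    unfolding omega_def using in_range by (simp add: sum.subset_diff)
  also have "sum ?t {a, b, k} = omega6 (local_part u) (local_part w)"
    using distinct by (simp add: omega6_def sum_lessThan_3 local_part_def loc_coord_def add_ac)
  finally show ?thesis by (simp add: add.commute)
qed

lemma omega6_cong:
  "(\<And>c. c < 6 \<Longrightarrow> x c = x' c \<and> y c = y' c) \<Longrightarrow> omega6 x y = omega6 x' y'"
  by (simp add: omega6_def sum_lessThan_3)

lemma local_map_omega: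
  assumes "symplectic6 M" "u \<in> Vsp m" "w \<in> Vsp m"
  shows "omega m (local_map M u) (local_map M w) = omega m u w"
proof -
  have "omega6 (local_part (local_map M u)) (local_part (local_map M w))
      = omega6 (mat_apply M (local_part u)) (mat_apply M (local_part w))"
    using assms by (intro omega6_cong) (simp add: local_part_local_map)
  then show ?thesis
    using assms by (simp add: omega_split local_map_fixes omega6_mat_apply)
qed

lemma local_map_Sp:
  assumes "symplectic6 M" "inverse_mats M N"
  shows "local_map M \<in> Sp m" and "v \<in> Vsp m \<Longrightarrow> inv_into (Vsp m) (local_map M) v = local_map N v"
proof -
  have MN: "local_map M (local_map N v) = v" and NM: "local_map N (local_map M v) = v"
    if "v \<in> Vsp m" for v
    using that assms(2) unfolding inverse_mats_def by (simp_all add: local_map_mult local_map_identity)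
  have bij: "bij_betw (local_map M) (Vsp m) (Vsp m)"
    by (rule bij_betw_byWitness[where f'="local_map N"]) (use MN NM local_map_Vsp in auto)
  show "local_map M \<in> Sp m"
    unfolding Sp_def using bij local_map_add local_map_omega[OF assms(1)]
    by (auto simp: extensional_def local_map_def)
  show "inv_into (Vsp m) (local_map M) v = local_map N v" if "v \<in> Vsp m"
    by (rule inv_into_f_eq) (use bij bij_betw_def MN that local_map_Vsp in auto)
qed

end

section \<open>Four symplectic substitutions moving W_a + W_b to y_a y_k\<close>

definition mat_of :: "nat list list \<Rightarrow> mat6" where
  "mat_of L c d = of_nat (L ! c ! d)"

text \<open>The substitutions h_i^(-1), i < 4, in local coordinates (x_a, x_b, x_k, y_a, y_b, y_k).\<close>
definition subst_mat :: "nat \<Rightarrow> mat6" where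
  "subst_mat i = mat_of ([
     [[0,0,1,0,0,0], [0,1,0,0,0,0], [1,0,0,0,0,0], [1,0,0,0,0,1], [0,0,0,0,1,0], [1,0,1,1,0,0]],
     [[0,0,1,0,0,0], [0,1,0,0,0,0], [1,0,1,0,0,0], [1,0,0,1,0,1], [0,0,0,0,1,0], [1,0,0,1,0,0]],
     [[1,0,0,0,0,0], [0,1,1,0,0,1], [1,0,0,0,1,1], [1,1,0,1,0,0], [1,0,0,0,1,0], [0,0,1,0,0,1]],
     [[1,0,1,0,0,1], [0,1,1,0,0,1], [1,0,0,1,1,1], [1,0,0,1,0,0], [0,0,0,0,1,0], [0,0,1,0,0,1]]
   ] ! i)"

definition group_mat :: "nat \<Rightarrow> mat6" where
  "group_mat i = mat_of ([
     [[0,0,1,0,0,0], [0,1,0,0,0,0], [1,0,0,0,0,0], [1,0,1,0,0,1], [0,0,0,0,1,0], [0,0,1,1,0,0]],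
     [[1,0,1,0,0,0], [0,1,0,0,0,0], [1,0,0,0,0,0], [1,0,1,0,0,1], [0,0,0,0,1,0], [0,0,0,1,0,1]],
     [[1,0,0,0,0,0], [0,1,0,0,0,1], [0,0,1,0,1,1], [1,1,0,1,0,1], [1,0,0,0,1,0], [0,0,1,0,1,0]],
     [[1,0,0,0,0,1], [0,1,0,0,0,1], [0,0,1,1,1,1], [1,0,0,1,0,1], [0,0,0,0,1,0], [0,0,1,1,1,0]]
   ] ! i)"

lemma group_mat_symplectic_inverse:
  assumes "i < 4"
  shows "symplectic6 (group_mat i) \<and> inverse_mats (group_mat i) (subst_mat i)"
proof -
  have "i = 0 \<or> i = 1 \<or> i = 2 \<or> i = 3" using assms by arith
  then show ?thesis
    by (elim disjE) (simp_all add: symplectic6_def inverse_mats_def all_lessThan_6 omega6_def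
        sum_lessThan_3 sum_lessThan_6 gram6_def mat_mult_def mat_id_def group_mat_def subst_mat_def
        mat_of_def)
qed

text \<open>The restriction of W_a + W_b to the local coordinates.\<close>
definition pair_form :: "(nat \<Rightarrow> bit) \<Rightarrow> bit" where
  "pair_form y = y 0 * y 3 + y 1 * y 4"

text \<open>The two identities behind the lemma, checked on all 64 local vectors: summing the four
  substitutions of W_a + W_b gives y_a y_k, and of (W_a + W_b) W_k gives y_a y_k W_b.\<close>
lemma subst_sum_pair_form:
  "(\<Sum>i<4. pair_form (mat_apply (subst_mat i) x)) = x 3 * x 5"
  by (simp add: sum_lessThan_4 pair_form_def mat_apply_def sum_lessThan_6 subst_mat_def mat_of_def)
    (cases "x 0"; cases "x 1"; cases "x 2"; cases "x 3"; cases "x 4"; cases "x 5"; simp)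

lemma subst_sum_pair_form_W:
  "(\<Sum>i<4. pair_form (mat_apply (subst_mat i) x) * mat_apply (subst_mat i) x 2 * mat_apply (subst_mat i) x 5)
     = x 3 * x 5 * (x 1 * x 4)"
  by (simp add: sum_lessThan_4 pair_form_def mat_apply_def sum_lessThan_6 subst_mat_def mat_of_def)
    (cases "x 0"; cases "x 1"; cases "x 2"; cases "x 3"; cases "x 4"; cases "x 5"; simp)

definition wval :: "nat \<Rightarrow> vec \<Rightarrow> bit" where
  "wval i u = u (Inl i) * u (Inr i)"

context three_indices
begin

definition transfer_elem :: "(vec \<Rightarrow> vec) \<Rightarrow> bit" where
  "transfer_elem = (\<lambda>h. \<Sum>i<4. if h = local_map (group_mat i) then 1 else 0)"

lemma transfer_elem_act:
  assumes "v \<in> Vsp m"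
  shows "gr_act m transfer_elem f v = (\<Sum>i<4. f (local_map (subst_mat i) v))"
proof -
  have "gr_act m transfer_elem f v = (\<Sum>i<4. f (inv_into (Vsp m) (local_map (group_mat i)) v))"
    unfolding transfer_elem_def
    using group_mat_symplectic_inverse local_map_Sp(1) by (intro gr_act_indicator_sum) blast
  also have "\<dots> = (\<Sum>i<4. f (local_map (subst_mat i) v))"
  proof (rule sum.cong)
    fix i :: nat assume "i \<in> {..<4}"
    then have "symplectic6 (group_mat i)" "inverse_mats (group_mat i) (subst_mat i)"
      using group_mat_symplectic_inverse by auto
    then show "f (inv_into (Vsp m) (local_map (group_mat i)) v) = f (local_map (subst_mat i) v)"
      using local_map_Sp(2) assms by simp
  qed simp
  finally show ?thesis .
qed

lemma transfer_elem_key: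
  assumes v: "v \<in> Vsp m"
    and f: "\<forall>u\<in>Vsp m. f u = (wval a u + wval b u) * (A u + wval k u * B u)"
    and A: "indep_of {a, b, k} A" and B: "indep_of {a, b, k} B"
  shows "gr_act m transfer_elem f v = v (Inr a) * v (Inr k) * (A v + wval b v * B v)"
proof -
  let ?x = "local_part v"
  let ?y = "\<lambda>i. mat_apply (subst_mat i) ?x"
  have coord: "loc_coord 0 = Inl a" "loc_coord 1 = Inl b" "loc_coord 2 = Inl k"
    "loc_coord 3 = Inr a" "loc_coord 4 = Inr b" "loc_coord 5 = Inr k"
    by (simp_all add: loc_coord_def)
  have local_vals: "local_map M v (loc_coord c) = mat_apply M ?x c" if "c < 6" for M c
    using local_map_local[OF v that] .
  have subst: "f (local_map (subst_mat i) v) = pair_form (?y i) * (A v + ?y i 2 * ?y i 5 * B v)" for i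
    using f v local_map_Vsp local_map_indep[OF A v] local_map_indep[OF B v]
      local_vals[of 0] local_vals[of 1] local_vals[of 2] local_vals[of 3] local_vals[of 4] local_vals[of 5]
    by (simp add: wval_def pair_form_def coord del: One_nat_def)
  have "gr_act m transfer_elem f v = (\<Sum>i<4. pair_form (?y i)) * A v
      + (\<Sum>i<4. pair_form (?y i) * ?y i 2 * ?y i 5) * B v"
    by (simp add: transfer_elem_act[OF v] subst distrib_left sum.distrib sum_distrib_left
        sum_distrib_right mult_ac)
  also have "\<dots> = v (Inr a) * v (Inr k) * (A v + wval b v * B v)"
    unfolding subst_sum_pair_form subst_sum_pair_form_W
    by (simp add: local_part_def coord wval_def algebra_simps del: One_nat_def)
  finally show ?thesis .
qed

end

lemma transfer_reduction:
  assumes abk: "distinct [a, b, k]" "{a, b, k} \<subseteq> {1..m}"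
    and F': "poly_class m F' \<rho>' \<sigma>' \<tau>' \<upsilon>'"
    and F: "\<forall>u\<in>Vsp m. phi F u = (wval a u + wval b u) * (A u + wval k u * B u)"
    and F'_eq: "\<forall>u\<in>Vsp m. phi F' u = u (Inr a) * u (Inr k) * (A u + wval b u * B u)"
    and A: "indep_of {a, b, k} A" and B: "indep_of {a, b, k} B"
  shows "\<exists>g. fun_class m (gr_act m g (phi F)) \<rho>' \<sigma>' \<tau>' \<upsilon>'"
proof -
  interpret three_indices m a b k
    using abk by unfold_locales
  have "\<forall>v\<in>Vsp m. gr_act m transfer_elem (phi F) v = phi F' v"
    using transfer_elem_key[OF _ F A B] F'_eq by simp
  then show ?thesis
    using F' unfolding fun_class_def by blast
qed

definition zcoord :: "(nat \<Rightarrow> bool) \<Rightarrow> nat \<Rightarrow> coord" where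
  "zcoord z i = (if z i then Inl i else Inr i)"

definition class_poly ::
  "nat \<Rightarrow> (nat \<Rightarrow> nat) \<Rightarrow> (nat \<Rightarrow> nat) \<Rightarrow> nat set \<Rightarrow> nat set \<Rightarrow> (nat \<Rightarrow> bool) \<Rightarrow> poly" where
  "class_poly \<rho> r r' S T z = (\<Prod>i<\<rho>. Wp (r i) + Wp (r' i)) * (\<Prod>i\<in>S. Wp i) * (\<Prod>i\<in>T. Var (zcoord z i))"

definition class_partition ::
  "nat \<Rightarrow> nat \<Rightarrow> (nat \<Rightarrow> nat) \<Rightarrow> (nat \<Rightarrow> nat) \<Rightarrow> nat set \<Rightarrow> nat set \<Rightarrow> nat set \<Rightarrow> bool" where
  "class_partition m \<rho> r r' S T U \<longleftrightarrow>
       inj_on r {..<\<rho>} \<and> inj_on r' {..<\<rho>} \<and>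
       r ` {..<\<rho>} \<inter> r' ` {..<\<rho>} = {} \<and>
       r ` {..<\<rho>} \<inter> S = {} \<and> r ` {..<\<rho>} \<inter> T = {} \<and> r ` {..<\<rho>} \<inter> U = {} \<and>
       r' ` {..<\<rho>} \<inter> S = {} \<and> r' ` {..<\<rho>} \<inter> T = {} \<and> r' ` {..<\<rho>} \<inter> U = {} \<and>
       S \<inter> T = {} \<and> S \<inter> U = {} \<and> T \<inter> U = {} \<and>
       r ` {..<\<rho>} \<union> r' ` {..<\<rho>} \<union> S \<union> T \<union> U = {1..m}"

lemma poly_class_iff: "poly_class m F \<rho> \<sigma> \<tau> \<upsilon> \<longleftrightarrow>
  (\<exists>r r' S T U z. class_partition m \<rho> r r' S T U \<and> card S = \<sigma> \<and> card T = \<tau> \<and> card U = \<upsilon>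
      \<and> F = class_poly \<rho> r r' S T z)"
  unfolding poly_class_def class_partition_def class_poly_def zcoord_def by blast

lemma phi_class_poly: "phi (class_poly \<rho> r r' S T z) u =
   (\<Prod>i<\<rho>. wval (r i) u + wval (r' i) u) * (\<Prod>i\<in>S. wval i u) * (\<Prod>i\<in>T. u (zcoord z i))"
  by (simp add: class_poly_def phi_mult phi_prod phi_add phi_Var Wp_def wval_def)

lemma prod_zcoord_insert2:
  assumes "finite T" "a \<notin> T" "k \<notin> T" "a \<noteq> k"
  shows "(\<Prod>i\<in>insert a (insert k T). u (zcoord (z(a := False, k := False)) i))
       = u (Inr a) * u (Inr k) * (\<Prod>i\<in>T. u (zcoord z i))"
proof -
  have "(\<Prod>i\<in>T. u (zcoord (z(a := False, k := False)) i)) = (\<Prod>i\<in>T. u (zcoord z i))"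
    using assms by (intro prod.cong) (auto simp: zcoord_def)
  then show ?thesis
    using assms by (simp add: zcoord_def mult.assoc)
qed

lemma indep_mult: "indep_of K A \<Longrightarrow> indep_of K B \<Longrightarrow> indep_of K (\<lambda>u. A u * B u)"
  unfolding indep_of_def by (metis (no_types, lifting))

lemma indep_prod: "(\<And>i. i \<in> I \<Longrightarrow> indep_of K (f i)) \<Longrightarrow> indep_of K (\<lambda>u. \<Prod>i\<in>I. f i u)"
  unfolding indep_of_def by (intro allI impI prod.cong) auto

lemma indep_const: "indep_of K (\<lambda>u. c)"
  by (simp add: indep_of_def)

lemma indep_pair: "i \<notin> K \<Longrightarrow> j \<notin> K \<Longrightarrow> indep_of K (\<lambda>u. wval i u + wval j u)"
  unfolding indep_of_def wval_def by auto

lemma indep_wval: "i \<notin> K \<Longrightarrow> indep_of K (wval i)"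
  unfolding indep_of_def wval_def by auto

lemma indep_zcoord: "i \<notin> K \<Longrightarrow> indep_of K (\<lambda>u. u (zcoord z i))"
  unfolding indep_of_def zcoord_def by auto

section \<open>Removing the first pair of a class\<close>

locale first_pair =
  fixes m n :: nat and r r' :: "nat \<Rightarrow> nat" and S T U :: "nat set" and z :: "nat \<Rightarrow> bool"
  assumes partition: "class_partition m (Suc n) r r' S T U"
begin

abbreviation a :: nat where "a \<equiv> r 0"
abbreviation b :: nat where "b \<equiv> r' 0"

definition X :: "nat set" where "X = (\<lambda>i. r (Suc i)) ` {..<n}"
definition X' :: "nat set" where "X' = (\<lambda>i. r' (Suc i)) ` {..<n}"

definition rest_pairs :: "vec \<Rightarrow> bit" where
  "rest_pairs u = (\<Prod>i<n. wval (r (Suc i)) u + wval (r' (Suc i)) u)"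
definition S_part :: "vec \<Rightarrow> bit" where "S_part u = (\<Prod>i\<in>S. wval i u)"
definition T_part :: "vec \<Rightarrow> bit" where "T_part u = (\<Prod>i\<in>T. u (zcoord z i))"

lemma inj_shifted: "inj_on (\<lambda>i. r (Suc i)) {..<n}" "inj_on (\<lambda>i. r' (Suc i)) {..<n}"
  using partition by (auto simp: class_partition_def inj_on_def)

lemma blocks:
  "a \<noteq> b" "a \<notin> X" "a \<notin> X'" "b \<notin> X" "b \<notin> X'"
  "a \<notin> S" "a \<notin> T" "a \<notin> U" "b \<notin> S" "b \<notin> T" "b \<notin> U"
  "X \<inter> X' = {}" "X \<inter> S = {}" "X \<inter> T = {}" "X \<inter> U = {}"
  "X' \<inter> S = {}" "X' \<inter> T = {}" "X' \<inter> U = {}" "S \<inter> T = {}" "S \<inter> U = {}" "T \<inter> U = {}"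
  and blocks_cover: "{1..m} = insert a (insert b (X \<union> X' \<union> S \<union> T \<union> U))"
proof -
  have R: "r ` {..<Suc n} = insert a X" and R': "r' ` {..<Suc n} = insert b X'"
    unfolding X_def X'_def lessThan_Suc_eq_insert_0 by (simp_all add: image_image)
  have inj: "inj_on r {..<Suc n}" "inj_on r' {..<Suc n}"
    using partition by (simp_all add: class_partition_def)
  have aX: "a \<notin> X" using inj(1) unfolding X_def inj_on_def by force
  have bX': "b \<notin> X'" using inj(2) unfolding X'_def inj_on_def by force
  have disj: "insert a X \<inter> insert b X' = {}" "insert a X \<inter> S = {}" "insert a X \<inter> T = {}"
    "insert a X \<inter> U = {}" "insert b X' \<inter> S = {}" "insert b X' \<inter> T = {}" "insert b X' \<inter> U = {}"
    "S \<inter> T = {}" "S \<inter> U = {}" "T \<inter> U = {}"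
    and cover: "insert a X \<union> insert b X' \<union> S \<union> T \<union> U = {1..m}"
    using partition unfolding class_partition_def R R' by simp_all
  show "a \<noteq> b" "a \<notin> X" "a \<notin> X'" "b \<notin> X" "b \<notin> X'"
    "a \<notin> S" "a \<notin> T" "a \<notin> U" "b \<notin> S" "b \<notin> T" "b \<notin> U"
    "X \<inter> X' = {}" "X \<inter> S = {}" "X \<inter> T = {}" "X \<inter> U = {}"
    "X' \<inter> S = {}" "X' \<inter> T = {}" "X' \<inter> U = {}" "S \<inter> T = {}" "S \<inter> U = {}" "T \<inter> U = {}"
    using aX bX' disj by auto
  show "{1..m} = insert a (insert b (X \<union> X' \<union> S \<union> T \<union> U))"
    using cover by auto
qed

lemma finite_blocks: "finite S" "finite T" "finite U"
  using blocks_cover by (metis finite_Un finite_atLeastAtMost finite_insert)+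

lemma phi_F:
  "phi (class_poly (Suc n) r r' S T z) u = (wval a u + wval b u) * (rest_pairs u * S_part u * T_part u)"
  unfolding phi_class_poly rest_pairs_def S_part_def T_part_def
  by (simp only: prod.lessThan_Suc_shift) (simp add: mult_ac)

lemma indep_rest_pairs: "K \<inter> (X \<union> X') = {} \<Longrightarrow> indep_of K rest_pairs"
  unfolding rest_pairs_def X_def X'_def by (intro indep_prod indep_pair) auto

lemma indep_S_part: "K \<inter> S = {} \<Longrightarrow> indep_of K S_part"
  unfolding S_part_def by (intro indep_prod indep_wval) auto

lemma indep_T_part: "K \<inter> T = {} \<Longrightarrow> indep_of K T_part"
  unfolding T_part_def by (intro indep_prod indep_zcoord) auto

lemma T_part_move:
  "k \<notin> T \<Longrightarrow> k \<noteq> a \<Longrightarrow>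
   (\<Prod>i\<in>insert a (insert k T). u (zcoord (z(a := False, k := False)) i)) = u (Inr a) * u (Inr k) * T_part u"
  unfolding T_part_def using finite_blocks(2) blocks(7) by (intro prod_zcoord_insert2) auto

lemma card_T_move: "k \<notin> T \<Longrightarrow> k \<noteq> a \<Longrightarrow> card (insert a (insert k T)) = card T + 2"
  using blocks(7) finite_blocks(2) by simp

text \<open>Case k in U: (W_a + W_b) P goes to y_a y_k P, and b takes the place of k in U.\<close>
lemma move_from_U:
  assumes kU: "k \<in> U"
  shows "\<exists>g. fun_class m (gr_act m g (phi (class_poly (Suc n) r r' S T z))) n (card S) (card T + 2) (card U)"
proof -
  define T' where "T' = insert a (insert k T)"
  define U' where "U' = insert b (U - {k})"
  define F' where "F' = class_poly n (\<lambda>i. r (Suc i)) (\<lambda>i. r' (Suc i)) S T' (z(a := False, k := False))"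
  have k: "k \<noteq> a" "k \<noteq> b" "k \<notin> X" "k \<notin> X'" "k \<notin> S" "k \<notin> T" "k \<in> {1..m}"
    using kU blocks blocks_cover by auto
  have cover: "X \<union> X' \<union> S \<union> T' \<union> U' = {1..m}"
    using blocks_cover kU unfolding T'_def U'_def by auto
  have "class_partition m n (\<lambda>i. r (Suc i)) (\<lambda>i. r' (Suc i)) S T' U'"
    unfolding class_partition_def X_def[symmetric] X'_def[symmetric]
    using inj_shifted cover blocks k by (intro conjI) (auto simp: T'_def U'_def)
  moreover have "card T' = card T + 2"
    using k by (simp add: T'_def card_T_move)
  moreover have "card U' = card U"
    using blocks(11) finite_blocks(3) card_Suc_Diff1[OF finite_blocks(3) kU] by (simp add: U'_def)
  ultimately have F'_class: "poly_class m F' n (card S) (card T + 2) (card U)"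
    unfolding poly_class_iff F'_def by metis
  show ?thesis
  proof (rule transfer_reduction[OF _ _ F'_class])
    show "distinct [a, b, k]" "{a, b, k} \<subseteq> {1..m}" using k blocks blocks_cover by auto
    show "\<forall>u\<in>Vsp m. phi (class_poly (Suc n) r r' S T z) u
        = (wval a u + wval b u) * (rest_pairs u * S_part u * T_part u + wval k u * 0)"
      by (simp add: phi_F)
    show "\<forall>u\<in>Vsp m. phi F' u = u (Inr a) * u (Inr k) * (rest_pairs u * S_part u * T_part u + wval b u * 0)"
      unfolding F'_def phi_class_poly T'_def using k
      by (simp add: T_part_move rest_pairs_def S_part_def mult_ac)
    show "indep_of {a, b, k} (\<lambda>u. rest_pairs u * S_part u * T_part u)"
      using blocks k by (intro indep_mult indep_rest_pairs indep_S_part indep_T_part) auto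
  qed (rule indep_const)
qed

text \<open>Case k in S: (W_a + W_b) W_k P goes to y_a y_k W_b P, and b takes the place of k in S.\<close>
lemma move_from_S:
  assumes kS: "k \<in> S"
  shows "\<exists>g. fun_class m (gr_act m g (phi (class_poly (Suc n) r r' S T z))) n (card S) (card T + 2) (card U)"
proof -
  define T' where "T' = insert a (insert k T)"
  define S' where "S' = insert b (S - {k})"
  define F' where "F' = class_poly n (\<lambda>i. r (Suc i)) (\<lambda>i. r' (Suc i)) S' T' (z(a := False, k := False))"
  define S_rest where "S_rest u = (\<Prod>i\<in>S - {k}. wval i u)" for u
  have k: "k \<noteq> a" "k \<noteq> b" "k \<notin> X" "k \<notin> X'" "k \<notin> U" "k \<notin> T" "k \<in> {1..m}"
    using kS blocks blocks_cover by auto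
  have cover: "X \<union> X' \<union> S' \<union> T' \<union> U = {1..m}"
    using blocks_cover kS unfolding T'_def S'_def by auto
  have "class_partition m n (\<lambda>i. r (Suc i)) (\<lambda>i. r' (Suc i)) S' T' U"
    unfolding class_partition_def X_def[symmetric] X'_def[symmetric]
    using inj_shifted cover blocks k by (intro conjI) (auto simp: T'_def S'_def)
  moreover have "card T' = card T + 2"
    using k by (simp add: T'_def card_T_move)
  moreover have "card S' = card S"
    using blocks(9) finite_blocks(1) card_Suc_Diff1[OF finite_blocks(1) kS] by (simp add: S'_def)
  ultimately have F'_class: "poly_class m F' n (card S) (card T + 2) (card U)"
    unfolding poly_class_iff F'_def by metis
  have S_split: "S_part u = wval k u * S_rest u" for u
    unfolding S_part_def S_rest_def using finite_blocks(1) kS by (simp add: prod.remove)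
  show ?thesis
  proof (rule transfer_reduction[OF _ _ F'_class])
    show "distinct [a, b, k]" "{a, b, k} \<subseteq> {1..m}" using k blocks blocks_cover by auto
    show "\<forall>u\<in>Vsp m. phi (class_poly (Suc n) r r' S T z) u
        = (wval a u + wval b u) * (0 + wval k u * (rest_pairs u * S_rest u * T_part u))"
      by (simp add: phi_F S_split mult_ac)
    show "\<forall>u\<in>Vsp m. phi F' u = u (Inr a) * u (Inr k) * (0 + wval b u * (rest_pairs u * S_rest u * T_part u))"
      unfolding F'_def phi_class_poly T'_def S'_def using k blocks(9) finite_blocks(1)
      by (simp add: T_part_move rest_pairs_def S_rest_def mult_ac)
    show "indep_of {a, b, k} (\<lambda>u. rest_pairs u * S_rest u * T_part u)"
      unfolding S_rest_def using blocks k
      by (intro indep_mult indep_rest_pairs indep_T_part indep_prod indep_wval) auto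
  qed (rule indep_const)
qed

text \<open>Case of a second pair (k, c): (W_a + W_b)(W_k + W_c) P goes to y_a y_k (W_b + W_c) P,
  and b takes the place of k as partner of c.\<close>
lemma move_from_pair:
  assumes "n \<noteq> 0"
  shows "\<exists>g. fun_class m (gr_act m g (phi (class_poly (Suc n) r r' S T z))) n (card S) (card T + 2) (card U)"
proof -
  define k where "k = r 1"
  define c where "c = r' 1"
  define r2 where "r2 = (\<lambda>i. r (Suc i))(0 := b)"
  define T' where "T' = insert a (insert k T)"
  define F' where "F' = class_poly n r2 (\<lambda>i. r' (Suc i)) S T' (z(a := False, k := False))"
  define Q where "Q u = (\<Prod>i\<in>{..<n} - {0}. wval (r (Suc i)) u + wval (r' (Suc i)) u)" for u
  have n0: "0 \<in> {..<n}" using assms by simp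
  have kX: "k \<in> X" and cX': "c \<in> X'"
    using n0 by (auto simp: k_def c_def X_def X'_def)
  have k: "k \<noteq> a" "k \<noteq> b" "k \<notin> X'" "k \<notin> S" "k \<notin> U" "k \<notin> T" "k \<in> {1..m}"
    using kX blocks blocks_cover by auto
  have X_rest: "X - {k} = (\<lambda>i. r (Suc i)) ` ({..<n} - {0})"
    unfolding X_def k_def using inj_shifted(1) n0 by (simp add: inj_on_image_set_diff)
  have R2: "r2 ` {..<n} = insert b (X - {k})"
  proof -
    have "r2 ` {..<n} = r2 ` insert 0 ({..<n} - {0})" using n0 by (simp add: insert_absorb)
    also have "\<dots> = insert b ((\<lambda>i. r (Suc i)) ` ({..<n} - {0}))" by (auto simp: r2_def)
    finally show ?thesis by (simp add: X_rest)
  qed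
  have inj_r2: "inj_on r2 {..<n}"
    unfolding r2_def using inj_shifted(1) blocks(4) by (intro inj_on_fun_updI) (auto simp: X_def)
  have cover: "insert b (X - {k}) \<union> X' \<union> S \<union> T' \<union> U = {1..m}"
    using blocks_cover kX unfolding T'_def by auto
  have "class_partition m n r2 (\<lambda>i. r' (Suc i)) S T' U"
    unfolding class_partition_def R2 X'_def[symmetric]
    using inj_r2 inj_shifted(2) cover blocks k by (intro conjI) (auto simp: T'_def)
  moreover have "card T' = card T + 2"
    using k by (simp add: T'_def card_T_move)
  ultimately have F'_class: "poly_class m F' n (card S) (card T + 2) (card U)"
    unfolding poly_class_iff F'_def by metis
  have rest_split: "rest_pairs u = (wval k u + wval c u) * Q u" for u
    unfolding rest_pairs_def Q_def k_def c_def using n0 by (simp add: prod.remove)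
  have new_pairs: "(\<Prod>i<n. wval (r2 i) u + wval (r' (Suc i)) u) = (wval b u + wval c u) * Q u" for u
  proof -
    have "(\<Prod>i<n. wval (r2 i) u + wval (r' (Suc i)) u)
        = (wval b u + wval c u) * (\<Prod>i\<in>{..<n} - {0}. wval (r2 i) u + wval (r' (Suc i)) u)"
      using n0 by (simp add: prod.remove r2_def c_def)
    also have "(\<Prod>i\<in>{..<n} - {0}. wval (r2 i) u + wval (r' (Suc i)) u) = Q u"
      unfolding Q_def r2_def by (intro prod.cong) auto
    finally show ?thesis .
  qed
  have c: "c \<notin> {a, b, k}" using cX' kX blocks by auto
  have indep_Q: "indep_of {a, b, k} Q"
  proof -
    have "r (Suc i) \<notin> {a, b, k}" "r' (Suc i) \<notin> {a, b, k}" if "i \<in> {..<n} - {0}" for i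
    proof -
      have "r (Suc i) \<in> X - {k}" using that X_rest by blast
      moreover have "r' (Suc i) \<in> X'" using that by (auto simp: X'_def)
      ultimately show "r (Suc i) \<notin> {a, b, k}" "r' (Suc i) \<notin> {a, b, k}"
        using blocks kX by auto
    qed
    then show ?thesis unfolding Q_def by (intro indep_prod indep_pair) auto
  qed
  let ?C = "\<lambda>u. Q u * S_part u * T_part u"
  show ?thesis
  proof (rule transfer_reduction[OF _ _ F'_class])
    show "distinct [a, b, k]" "{a, b, k} \<subseteq> {1..m}" using k blocks blocks_cover by auto
    show "\<forall>u\<in>Vsp m. phi (class_poly (Suc n) r r' S T z) u
        = (wval a u + wval b u) * (wval c u * ?C u + wval k u * ?C u)"
      by (simp add: phi_F rest_split algebra_simps)
    show "\<forall>u\<in>Vsp m. phi F' u = u (Inr a) * u (Inr k) * (wval c u * ?C u + wval b u * ?C u)"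
      unfolding F'_def phi_class_poly T'_def new_pairs S_part_def using k
      by (simp add: T_part_move algebra_simps)
    have "indep_of {a, b, k} ?C"
      using blocks k by (intro indep_mult indep_Q indep_S_part indep_T_part) auto
    then show "indep_of {a, b, k} (\<lambda>u. wval c u * ?C u)" "indep_of {a, b, k} ?C"
      using c by (auto intro: indep_mult indep_wval)
  qed
qed

lemma single_pair_card:
  assumes "n = 0" "S = {}" "U = {}"
  shows "card T + 2 = m"
proof -
  have "X = {}" "X' = {}" unfolding X_def X'_def using assms(1) by simp_all
  then have "card {1..m} = card (insert a (insert b T))"
    using blocks_cover assms(2,3) by simp
  then show ?thesis using blocks finite_blocks(2) by simp
qed

end

theorem lemma6p3:
  fixes m \<rho> \<sigma> \<tau> \<upsilon> :: nat and F :: poly and B :: "nat \<Rightarrow> nat \<Rightarrow> poly set"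
  assumes "\<forall>lam. basis_choice m lam (B lam)"
    and "symplectic_basis_poly m B F"
    and "poly_class m F \<rho> \<sigma> \<tau> \<upsilon>"
    and "(\<rho>, \<sigma>, \<tau>, \<upsilon>) \<noteq> (1, 0, m - 2, 0)"
    and "\<rho> > 0"
  shows "\<exists>g. fun_class m (gr_act m g (phi F)) (\<rho> - 1) \<sigma> (\<tau> + 2) \<upsilon>"
proof -
  obtain r r' S T U z where part: "class_partition m \<rho> r r' S T U"
    and cards: "card S = \<sigma>" "card T = \<tau>" "card U = \<upsilon>" and F: "F = class_poly \<rho> r r' S T z"
    using assms(3) unfolding poly_class_iff by blast
  obtain n where \<rho>: "\<rho> = Suc n"
    using assms(5) not0_implies_Suc by blast
  interpret first_pair m n r r' S T U z
    using part \<rho> by unfold_locales simp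
  have "\<exists>g. fun_class m (gr_act m g (phi F)) n (card S) (card T + 2) (card U)"
  proof (cases "U = {}")
    case False
    then show ?thesis unfolding F \<rho> using move_from_U by blast
  next
    case U: True
    show ?thesis
    proof (cases "S = {}")
      case False
      then show ?thesis unfolding F \<rho> using move_from_S by blast
    next
      case S: True
      have "n \<noteq> 0"
        using single_pair_card[OF _ S U] assms(4) cards S U \<rho> by (cases "n = 0") auto
      then show ?thesis unfolding F \<rho> by (rule move_from_pair)
    qed
  qed
  then show ?thesis using cards \<rho> by simp
qed

end
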